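(* Let $\mathbf{u}\in\mathbb{R}^m$ be a fixed vector, let $\mathbf{R}\in\mathbb{R}^{m\times n}$ be a random matrix such that either each row $\mathbf{R}_i$ is sampled i.i.d. from an isotropic distribution $P$ on $\mathbb{R}^n$, or $\hat{\mathbf{R}}$ is a randomly generated matrix with orthogonal rows, and let $\mathbf{z}\in\mathbb{R}^n$ have coordinates $\mathbf{z}_i$ i.i.d. $\mathrm{Bernoulli}(0.5)$, independent of $\mathbf{R}$. Let $\mathbf{v}=\sqrt{2}\cdot\mathbf{z}\odot\left(\hat{\mathbf{R}}^T\mathbf{u}\right)$. Then $\mathbb{E}[\lVert\mathbf{v}\rVert^2]=\lVert\mathbf{u}\rVert^2$.
   Context: For a matrix $\mathbf{R}$ with nonzero rows $\mathbf{R}_i$, $\hat{\mathbf{R}}$ denotes the matrix whose $i$-th row is $\mathbf{R}_i/\lVert\mathbf{R}_i\rVert_2$. A distribution $P$ on $\mathbb{R}^n$ is isotropic if it is invariant under all orthogonal transformations (all directions equally likely), with no mass at the origin. "Randomly generated matrix with orthogonal rows" means $\hat{\mathbf{R}}$ has orthonormal rows (so $m\le n$), drawn uniformly over all rotations. $\odot$ is the coordinatewise (Hadamard) product. *)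

theory Defs
  imports "HOL-Probability.Probability"
begin

definition rownormalize :: "real^'n^'m \<Rightarrow> real^'n^'m" where
  "rownormalize R = (\<chi> i. (1 / norm (R $ i)) *\<^sub>R (R $ i))"

definition isotropic :: "(real^'n) measure \<Rightarrow> bool" where
  "isotropic P \<longleftrightarrow> prob_space P \<and> sets P = sets borel \<and> emeasure P {0} = 0 \<and>
     (\<forall>Q::real^'n^'n. orthogonal_matrix Q \<longrightarrow> distr P borel (\<lambda>x. Q *v x) = P)"

definition orthonormal_rows :: "real^'n^'m \<Rightarrow> bool" where
  "orthonormal_rows A \<longleftrightarrow> (\<forall>i k. (A $ i) \<bullet> (A $ k) = (if i = k then 1 else 0))"

definition rows_iid_isotropic :: "'a measure \<Rightarrow> ('a \<Rightarrow> real^'n^'m) \<Rightarrow> bool" where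
  "rows_iid_isotropic M R \<longleftrightarrow> (\<exists>P. isotropic P \<and>
     prob_space.indep_vars M (\<lambda>_. borel) (\<lambda>i \<omega>. R \<omega> $ i) UNIV \<and>
     (\<forall>i. distr M borel (\<lambda>\<omega>. R \<omega> $ i) = P))"

text \<open>Case 2: the row-normalised matrix has orthonormal rows (a.s.) and is uniformly
  distributed over rotations, i.e. its law is invariant under right multiplication by
  every orthogonal n x n matrix (Haar measure on the Stiefel manifold).\<close>
definition uniform_orthonormal_rows :: "'a measure \<Rightarrow> ('a \<Rightarrow> real^'n^'m) \<Rightarrow> bool" where
  "uniform_orthonormal_rows M R \<longleftrightarrow>
     (AE \<omega> in M. orthonormal_rows (rownormalize (R \<omega>))) \<and>
     (\<forall>Q::real^'n^'n. orthogonal_matrix Q \<longrightarrow>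
        distr M borel (\<lambda>\<omega>. rownormalize (R \<omega>) ** Q) = distr M borel (\<lambda>\<omega>. rownormalize (R \<omega>)))"

end

theory Submission
  imports Defs
begin

text \<open>Write W = transpose (rownormalize R) *v u = (SUM i. u_i *R sgn R_i). Since z_j is 0 or 1,
  norm v ^ 2 = 2 * (SUM j. z_j * W_j ^ 2), and as z_j is a fair bit independent of R each summand has
  expectation E[W_j ^ 2] / 2; hence E[norm v ^ 2] = E[norm W ^ 2] = (SUM i k. u_i u_k E[sgn R_i \<bullet> sgn R_k]).
  The normalised rows are orthonormal in mean: on the diagonal sgn R_i is almost surely a unit vector
  (an isotropic law has no atom at 0; in the second model the rows are orthonormal outright), and off the
  diagonal independence splits E[sgn R_i \<bullet> sgn R_k] into products of coordinates of E[sgn R_i], which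
  vanish because an isotropic law is invariant under x \<mapsto> -x.\<close>

lemma borel_measurable_vec_nth [measurable (raw)]:
  fixes f :: "'a \<Rightarrow> 'b::{real_normed_vector,second_countable_topology}^'n"
  shows "f \<in> borel_measurable M \<Longrightarrow> (\<lambda>x. f x $ i) \<in> borel_measurable M"
  by (rule measurable_compose[OF _ borel_measurable_continuous_onI]) (auto intro: continuous_intros)

text \<open>On a zero row both sides are 0, because 1 / 0 = 0.\<close>
lemma rownormalize_nth [simp]: "rownormalize A $ i = sgn (A $ i)"
  by (simp add: rownormalize_def sgn_div_norm divide_inverse_commute)

lemma transpose_mult_vec_eq_sum_rows:
  "transpose A *v u = (\<Sum>i\<in>UNIV. u $ i *\<^sub>R A $ i)"
  by (simp add: vec_eq_iff matrix_vector_mult_def transpose_def sum_component mult.commute)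

lemma power2_norm_vec_eq_sum: "(norm (v::real^'n))\<^sup>2 = (\<Sum>j\<in>UNIV. (v $ j)\<^sup>2)"
  unfolding power2_norm_eq_inner inner_vec_def by (simp add: power2_eq_square)

lemma norm_sum_scaleR_sgn_le: "norm (\<Sum>i\<in>I. c i *\<^sub>R sgn (x i)) \<le> (\<Sum>i\<in>I. \<bar>c i\<bar>)"
proof -
  have "norm (\<Sum>i\<in>I. c i *\<^sub>R sgn (x i)) \<le> (\<Sum>i\<in>I. norm (c i *\<^sub>R sgn (x i)))"
    by (rule norm_sum)
  also have "\<dots> \<le> (\<Sum>i\<in>I. \<bar>c i\<bar>)"
    by (rule sum_mono) (simp add: norm_sgn mult_left_le)
  finally show ?thesis .
qed

lemma power2_nth_sum_scaleR_sgn_le: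
  fixes x :: "'i \<Rightarrow> real^'n"
  shows "((\<Sum>i\<in>I. c i *\<^sub>R sgn (x i)) $ j)\<^sup>2 \<le> (\<Sum>i\<in>I. \<bar>c i\<bar>)\<^sup>2"
proof -
  have "\<bar>(\<Sum>i\<in>I. c i *\<^sub>R sgn (x i)) $ j\<bar> \<le> (\<Sum>i\<in>I. \<bar>c i\<bar>)"
    using component_le_norm_cart norm_sum_scaleR_sgn_le by (rule order_trans)
  then show ?thesis
    by (metis abs_ge_zero power2_abs power_mono)
qed

lemma abs_inner_sgn_le_1: "\<bar>sgn x \<bullet> sgn y\<bar> \<le> 1"
  using Cauchy_Schwarz_ineq2[of "sgn x" "sgn y"] by (simp add: norm_sgn split: if_splits)

lemma abs_sgn_vec_nth_le_1: "\<bar>sgn (x::real^'n) $ j\<bar> \<le> 1"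
  using component_le_norm_cart[of "sgn x" j] by (simp add: norm_sgn split: if_splits)

lemma neg_mat_1_mult_vec [simp]: "(- mat 1 :: real^'n^'n) *v x = - x"
proof -
  have "(- mat 1 :: real^'n^'n) *v x = - (mat 1 *v x)"
    by (simp add: vec_eq_iff matrix_vector_mult_def sum_negf)
  then show ?thesis by simp
qed

lemma orthogonal_matrix_neg_mat_1: "orthogonal_matrix (- mat 1 :: real^'n^'n)"
proof -
  have "transpose (- mat 1 :: real^'n^'n) = - mat 1"
    by (simp add: vec_eq_iff transpose_def mat_def)
  moreover have "(- mat 1 :: real^'n^'n) ** (- mat 1) = mat 1 ** mat 1"
    by (simp add: vec_eq_iff matrix_matrix_mult_def)
  ultimately show ?thesis by (simp add: orthogonal_matrix)
qed

lemma (in prob_space) indep_varI_prob: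
  assumes X: "random_variable S X" and Y: "random_variable T Y"
    and prod: "\<And>A B. A \<in> sets S \<Longrightarrow> B \<in> sets T \<Longrightarrow>
      prob {\<omega> \<in> space M. X \<omega> \<in> A \<and> Y \<omega> \<in> B}
      = prob {\<omega> \<in> space M. X \<omega> \<in> A} * prob {\<omega> \<in> space M. Y \<omega> \<in> B}"
  shows "indep_var S X T Y"
proof -
  have "indep_set {X -` A \<inter> space M |A. A \<in> sets S} {Y -` B \<inter> space M |B. B \<in> sets T}"
  proof (rule indep_setI)
    fix a b assume "a \<in> {X -` A \<inter> space M |A. A \<in> sets S}" "b \<in> {Y -` B \<inter> space M |B. B \<in> sets T}"
    then obtain A B where "A \<in> sets S" "B \<in> sets T" "a = X -` A \<inter> space M" "b = Y -` B \<inter> space M"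
      by blast
    then show "prob (a \<inter> b) = prob a * prob b"
      using prod[of A B] by (simp add: Int_def conj_commute conj_left_commute vimage_def)
  qed (use X Y in \<open>auto simp: measurable_sets\<close>)
  moreover have "(\<lambda>i. {case_bool X Y i -` A \<inter> space M |A. A \<in> sets (case_bool S T i)})
      = case_bool {X -` A \<inter> space M |A. A \<in> sets S} {Y -` B \<inter> space M |B. B \<in> sets T}"
    by (rule ext) (simp split: bool.split)
  ultimately show ?thesis
    unfolding indep_var_def indep_vars_def2 indep_set_def using X Y by (simp split: bool.split)
qed

lemma (in prob_space) indep_varI_prob_compose:
  assumes X: "random_variable S X" and Y: "random_variable T Y"
    and f: "f \<in> measurable S N" and g: "g \<in> measurable T N"
    and prod: "\<And>A B. A \<in> sets S \<Longrightarrow> B \<in> sets T \<Longrightarrow>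
      prob {\<omega> \<in> space M. X \<omega> \<in> A \<and> Y \<omega> \<in> B}
      = prob {\<omega> \<in> space M. X \<omega> \<in> A} * prob {\<omega> \<in> space M. Y \<omega> \<in> B}"
  shows "indep_var N (\<lambda>\<omega>. f (X \<omega>)) N (\<lambda>\<omega>. g (Y \<omega>))"
proof (rule indep_varI_prob)
  fix A B assume "A \<in> sets N" "B \<in> sets N"
  then have "f -` A \<inter> space S \<in> sets S" "g -` B \<inter> space T \<in> sets T"
    using f g by (auto intro: measurable_sets)
  from prod[OF this] show "prob {\<omega> \<in> space M. f (X \<omega>) \<in> A \<and> g (Y \<omega>) \<in> B}
      = prob {\<omega> \<in> space M. f (X \<omega>) \<in> A} * prob {\<omega> \<in> space M. g (Y \<omega>) \<in> B}"
    using measurable_space[OF X] measurable_space[OF Y] by (simp cong: conj_cong)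
qed (use X Y f g in \<open>auto intro: measurable_compose\<close>)

lemma (in prob_space) expectation_mult_fair_bit:
  fixes b Y :: "'a \<Rightarrow> real"
  assumes bit: "AE \<omega> in M. b \<omega> \<in> {0, 1}" and fair: "prob {\<omega> \<in> space M. b \<omega> = 1} = 1 / 2"
    and indep: "indep_var borel Y borel b" and Y: "integrable M Y"
  shows "expectation (\<lambda>\<omega>. Y \<omega> * b \<omega>) = expectation Y / 2"
proof -
  have [measurable]: "b \<in> borel_measurable M"
    using indep_var_rv2[OF indep] by simp
  have b: "integrable M b"
    by (rule integrable_const_bound[where B=1]) (use bit in \<open>auto elim: AE_mp\<close>)
  have "expectation b = expectation (indicator {\<omega> \<in> space M. b \<omega> = 1})"
    by (rule integral_cong_AE) (use bit in \<open>auto simp: indicator_def\<close>)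
  also have "\<dots> = 1 / 2"
    using fair by (simp add: Collect_conj_eq[symmetric])
  finally show ?thesis
    using indep_var_lebesgue_integral[OF indep Y b] by simp
qed

lemma (in prob_space) expectation_norm_fair_bit_mask:
  fixes z W :: "'a \<Rightarrow> real^'n"
  assumes bit: "\<And>j. AE \<omega> in M. z \<omega> $ j \<in> {0, 1}"
    and fair: "\<And>j. prob {\<omega> \<in> space M. z \<omega> $ j = 1} = 1 / 2"
    and indep: "\<And>j. indep_var borel (\<lambda>\<omega>. (W \<omega> $ j)\<^sup>2) borel (\<lambda>\<omega>. z \<omega> $ j)"
    and int: "\<And>j. integrable M (\<lambda>\<omega>. (W \<omega> $ j)\<^sup>2)"
  shows "expectation (\<lambda>\<omega>. (norm (sqrt 2 *\<^sub>R (\<chi> j. z \<omega> $ j * W \<omega> $ j)))\<^sup>2)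
    = expectation (\<lambda>\<omega>. (norm (W \<omega>))\<^sup>2)"
proof -
  have [measurable]: "(\<lambda>\<omega>. z \<omega> $ j) \<in> borel_measurable M" "(\<lambda>\<omega>. (W \<omega> $ j)\<^sup>2) \<in> borel_measurable M"
    for j using indep_var_rv2[OF indep] indep_var_rv1[OF indep] by simp_all
  have "expectation (\<lambda>\<omega>. (norm (sqrt 2 *\<^sub>R (\<chi> j. z \<omega> $ j * W \<omega> $ j)))\<^sup>2)
      = expectation (\<lambda>\<omega>. 2 * (\<Sum>j\<in>UNIV. (W \<omega> $ j)\<^sup>2 * (z \<omega> $ j)\<^sup>2))"
    by (simp add: power_mult_distrib power2_norm_vec_eq_sum mult.commute)
  also have "\<dots> = expectation (\<lambda>\<omega>. 2 * (\<Sum>j\<in>UNIV. (W \<omega> $ j)\<^sup>2 * z \<omega> $ j))"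
  proof (rule integral_cong_AE)
    have "AE \<omega> in M. \<forall>j. z \<omega> $ j \<in> {0, 1}"
      using bit by (subst AE_all_countable) blast
    then show "AE \<omega> in M. 2 * (\<Sum>j\<in>UNIV. (W \<omega> $ j)\<^sup>2 * (z \<omega> $ j)\<^sup>2)
        = 2 * (\<Sum>j\<in>UNIV. (W \<omega> $ j)\<^sup>2 * z \<omega> $ j)"
    proof eventually_elim
      case (elim \<omega>)
      then have "(z \<omega> $ j)\<^sup>2 = z \<omega> $ j" for j
        by (cases "z \<omega> $ j = 0") auto
      then show ?case by simp
    qed
  qed measurable
  also have "\<dots> = 2 * (\<Sum>j\<in>UNIV. expectation (\<lambda>\<omega>. (W \<omega> $ j)\<^sup>2 * z \<omega> $ j))"
  proof -
    have "integrable M (\<lambda>\<omega>. z \<omega> $ j)" for j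
      by (rule integrable_const_bound[where B=1]) (use bit[of j] in \<open>auto elim: AE_mp\<close>)
    then show ?thesis
      using indep_var_integrable[OF indep int] by simp
  qed
  also have "\<dots> = (\<Sum>j\<in>UNIV. expectation (\<lambda>\<omega>. (W \<omega> $ j)\<^sup>2))"
    using expectation_mult_fair_bit[OF bit fair indep int] by (simp add: sum_distrib_left mult.commute)
  also have "\<dots> = expectation (\<lambda>\<omega>. (norm (W \<omega>))\<^sup>2)"
    using int by (simp add: power2_norm_vec_eq_sum)
  finally show ?thesis .
qed

lemma (in prob_space) expectation_norm_sum_orthonormal:
  fixes X :: "'i::finite \<Rightarrow> 'a \<Rightarrow> 'b::real_inner" and u :: "real^'i"
  assumes int: "\<And>i k. integrable M (\<lambda>\<omega>. X i \<omega> \<bullet> X k \<omega>)"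
    and gram: "\<And>i k. expectation (\<lambda>\<omega>. X i \<omega> \<bullet> X k \<omega>) = (if i = k then 1 else 0)"
  shows "expectation (\<lambda>\<omega>. (norm (\<Sum>i\<in>UNIV. u $ i *\<^sub>R X i \<omega>))\<^sup>2) = (norm u)\<^sup>2"
proof -
  have "(norm (\<Sum>i\<in>UNIV. u $ i *\<^sub>R X i \<omega>))\<^sup>2
      = (\<Sum>i\<in>UNIV. \<Sum>k\<in>UNIV. u $ i * u $ k * (X i \<omega> \<bullet> X k \<omega>))" for \<omega>
    by (simp add: power2_norm_eq_inner inner_sum_left inner_sum_right sum_distrib_left mult.assoc mult.left_commute inner_commute)
  then have "expectation (\<lambda>\<omega>. (norm (\<Sum>i\<in>UNIV. u $ i *\<^sub>R X i \<omega>))\<^sup>2)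
      = (\<Sum>i\<in>UNIV. \<Sum>k\<in>UNIV. u $ i * u $ k * expectation (\<lambda>\<omega>. X i \<omega> \<bullet> X k \<omega>))"
    using int by simp
  also have "\<dots> = (norm u)\<^sup>2"
    unfolding power2_norm_vec_eq_sum by (simp add: gram power2_eq_square if_distrib sum.delta cong: if_cong)
  finally show ?thesis .
qed

lemma isotropic_integral_odd:
  fixes f :: "real^'n \<Rightarrow> real"
  assumes iso: "isotropic P" and f[measurable]: "f \<in> borel_measurable borel"
    and odd: "\<And>x. f (- x) = - f x"
  shows "integral\<^sup>L P f = 0"
proof -
  have sets_P: "sets P = sets borel"
    using iso by (simp add: isotropic_def)
  have "distr P borel (\<lambda>x. (- mat 1 :: real^'n^'n) *v x) = P"
    using iso orthogonal_matrix_neg_mat_1 unfolding isotropic_def by blast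
  then have "integral\<^sup>L P f = integral\<^sup>L (distr P borel uminus) f"
    by simp
  also have "\<dots> = integral\<^sup>L P (\<lambda>x. f (- x))"
    by (subst integral_distr) (simp_all add: measurable_cong_sets[OF sets_P refl])
  also have "\<dots> = - integral\<^sup>L P f"
    by (simp add: odd)
  finally show ?thesis by simp
qed

lemma isotropic_AE_nonzero:
  assumes "isotropic P"
  shows "AE x in P. x \<noteq> 0"
proof (rule AE_I')
  show "{0} \<in> null_sets P"
    using assms by (simp add: isotropic_def null_sets_def)
qed auto

lemma (in prob_space) indep_vars_imp_indep_var:
  assumes "indep_vars M' X I" "i \<in> I" "k \<in> I" "i \<noteq> k"
  shows "indep_var (M' i) (X i) (M' k) (X k)"
proof -
  have "indep_var (PiM {i} M') (\<lambda>\<omega>. restrict (\<lambda>l. X l \<omega>) {i}) (PiM {k} M') (\<lambda>\<omega>. restrict (\<lambda>l. X l \<omega>) {k})"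
    using assms by (intro indep_var_restrict) auto
  from indep_var_compose[OF this measurable_component_singleton measurable_component_singleton]
  show ?thesis by (simp add: comp_def)
qed

lemma (in prob_space) expectation_sgn_nth_isotropic:
  fixes X :: "'a \<Rightarrow> real^'n"
  assumes [measurable]: "X \<in> borel_measurable M" and iso: "isotropic (distr M borel X)"
  shows "expectation (\<lambda>\<omega>. sgn (X \<omega>) $ j) = 0"
proof -
  have "expectation (\<lambda>\<omega>. sgn (X \<omega>) $ j) = integral\<^sup>L (distr M borel X) (\<lambda>x. sgn x $ j)"
    by (simp add: integral_distr)
  also have "\<dots> = 0"
    using iso by (rule isotropic_integral_odd) (simp_all add: sgn_minus)
  finally show ?thesis .
qed

lemma (in prob_space) expectation_inner_sgn_self_isotropic:
  fixes X :: "'a \<Rightarrow> real^'n"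
  assumes [measurable]: "X \<in> borel_measurable M" and iso: "isotropic (distr M borel X)"
  shows "expectation (\<lambda>\<omega>. sgn (X \<omega>) \<bullet> sgn (X \<omega>)) = 1"
proof -
  have "AE \<omega> in M. X \<omega> \<noteq> 0"
    using isotropic_AE_nonzero[OF iso] by (simp add: AE_distr_iff)
  then have "expectation (\<lambda>\<omega>. sgn (X \<omega>) \<bullet> sgn (X \<omega>)) = expectation (\<lambda>\<omega>. 1)"
    by (intro integral_cong_AE) (auto simp: power2_norm_eq_inner[symmetric] norm_sgn)
  then show ?thesis by (simp add: prob_space)
qed

lemma (in prob_space) expectation_inner_sgn_rows_iid_isotropic:
  fixes R :: "'a \<Rightarrow> real^'n^'m"
  assumes [measurable]: "R \<in> borel_measurable M" and "rows_iid_isotropic M R"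
  shows "expectation (\<lambda>\<omega>. sgn (R \<omega> $ i) \<bullet> sgn (R \<omega> $ k)) = (if i = k then 1 else 0)"
proof -
  obtain P where "isotropic P" and rows: "indep_vars (\<lambda>_. borel) (\<lambda>i \<omega>. R \<omega> $ i) UNIV"
    and "\<And>i. distr M borel (\<lambda>\<omega>. R \<omega> $ i) = P"
    using assms(2) unfolding rows_iid_isotropic_def by blast
  then have iso: "isotropic (distr M borel (\<lambda>\<omega>. R \<omega> $ l))" for l
    by simp
  show ?thesis
  proof (cases "i = k")
    case True
    then show ?thesis
      using expectation_inner_sgn_self_isotropic[OF _ iso] by simp
  next
    case False
    have rows_ik: "indep_var borel (\<lambda>\<omega>. R \<omega> $ i) borel (\<lambda>\<omega>. R \<omega> $ k)"
      using indep_vars_imp_indep_var[OF rows _ _ False] by simp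
    have indep: "indep_var borel (\<lambda>\<omega>. sgn (R \<omega> $ i) $ j) borel (\<lambda>\<omega>. sgn (R \<omega> $ k) $ j)" for j
      using indep_var_compose[OF rows_ik, of "\<lambda>x. sgn x $ j" borel "\<lambda>x. sgn x $ j" borel]
      by (simp add: comp_def)
    have int: "integrable M (\<lambda>\<omega>. sgn (R \<omega> $ l) $ j)" for l j
      by (rule integrable_const_bound[where B=1]) (simp_all add: abs_sgn_vec_nth_le_1)
    have "expectation (\<lambda>\<omega>. sgn (R \<omega> $ i) \<bullet> sgn (R \<omega> $ k))
        = (\<Sum>j\<in>UNIV. expectation (\<lambda>\<omega>. sgn (R \<omega> $ i) $ j * sgn (R \<omega> $ k) $ j))"
      using indep_var_integrable[OF indep int int] by (simp add: inner_vec_def)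
    also have "\<dots> = 0"
      by (simp add: indep_var_lebesgue_integral[OF indep int int] expectation_sgn_nth_isotropic[OF _ iso])
    finally show ?thesis
      using False by simp
  qed
qed

lemma (in prob_space) expectation_inner_sgn_rows_uniform_orthonormal:
  fixes R :: "'a \<Rightarrow> real^'n^'m"
  assumes [measurable]: "R \<in> borel_measurable M" and "uniform_orthonormal_rows M R"
  shows "expectation (\<lambda>\<omega>. sgn (R \<omega> $ i) \<bullet> sgn (R \<omega> $ k)) = (if i = k then 1 else 0)"
proof -
  have "AE \<omega> in M. orthonormal_rows (rownormalize (R \<omega>))"
    using assms(2) unfolding uniform_orthonormal_rows_def by blast
  then have "expectation (\<lambda>\<omega>. sgn (R \<omega> $ i) \<bullet> sgn (R \<omega> $ k)) = expectation (\<lambda>\<omega>. if i = k then 1 else 0)"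
    by (intro integral_cong_AE) (auto simp: orthonormal_rows_def)
  then show ?thesis by (simp add: prob_space)
qed

theorem theorem2:
  fixes M :: "'a measure"
    and u :: "real^'m"
    and R :: "'a \<Rightarrow> real^'n^'m"
    and z :: "'a \<Rightarrow> real^'n"
  assumes "prob_space M"
    and "R \<in> borel_measurable M"
    and "z \<in> borel_measurable M"
    and "rows_iid_isotropic M R \<or> uniform_orthonormal_rows M R"
    and "\<And>j. AE \<omega> in M. z \<omega> $ j \<in> {0, 1}"
    and "\<And>j. measure M {\<omega> \<in> space M. z \<omega> $ j = 1} = 1 / 2"
    and "prob_space.indep_vars M (\<lambda>_. borel) (\<lambda>j \<omega>. z \<omega> $ j) UNIV"
    and "\<And>A B. A \<in> sets (borel :: (real^'n^'m) measure) \<Longrightarrow> B \<in> sets (borel :: (real^'n) measure) \<Longrightarrow>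
           measure M {\<omega> \<in> space M. R \<omega> \<in> A \<and> z \<omega> \<in> B}
           = measure M {\<omega> \<in> space M. R \<omega> \<in> A} * measure M {\<omega> \<in> space M. z \<omega> \<in> B}"
  shows "prob_space.expectation M
           (\<lambda>\<omega>. (norm (sqrt 2 *\<^sub>R (\<chi> j. z \<omega> $ j * (transpose (rownormalize (R \<omega>)) *v u) $ j)))\<^sup>2)
         = (norm u)\<^sup>2"
proof -
  interpret prob_space M by fact
  note [measurable] = assms(2,3)
  define W where "W \<omega> = transpose (rownormalize (R \<omega>)) *v u" for \<omega>
  have W_eq: "W = (\<lambda>\<omega>. \<Sum>i\<in>UNIV. u $ i *\<^sub>R sgn (R \<omega> $ i))"
    unfolding W_def transpose_mult_vec_eq_sum_rows by simp
  have indep: "indep_var borel (\<lambda>\<omega>. (W \<omega> $ j)\<^sup>2) borel (\<lambda>\<omega>. z \<omega> $ j)" for j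
    unfolding W_eq
    by (rule indep_varI_prob_compose[where f="\<lambda>A. ((\<Sum>i\<in>UNIV. u $ i *\<^sub>R sgn (A $ i)) $ j)\<^sup>2"
        and g="\<lambda>x. x $ j"]) (measurable, fact assms(8))
  have int: "integrable M (\<lambda>\<omega>. (W \<omega> $ j)\<^sup>2)" for j
    unfolding W_eq
    by (intro integrable_const_bound[where B="(\<Sum>i\<in>UNIV. \<bar>u $ i\<bar>)\<^sup>2"] AE_I2)
      (simp_all only: real_norm_def abs_power2 power2_nth_sum_scaleR_sgn_le, measurable)
  have gram: "expectation (\<lambda>\<omega>. sgn (R \<omega> $ i) \<bullet> sgn (R \<omega> $ k)) = (if i = k then 1 else 0)" for i k
    using assms(4) expectation_inner_sgn_rows_iid_isotropic[OF assms(2)]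
      expectation_inner_sgn_rows_uniform_orthonormal[OF assms(2)] by blast
  have "expectation (\<lambda>\<omega>. (norm (sqrt 2 *\<^sub>R (\<chi> j. z \<omega> $ j * W \<omega> $ j)))\<^sup>2)
      = expectation (\<lambda>\<omega>. (norm (W \<omega>))\<^sup>2)"
    using assms(5,6) indep int by (rule expectation_norm_fair_bit_mask)
  also have "\<dots> = (norm u)\<^sup>2"
    unfolding W_eq using gram
    by (rule expectation_norm_sum_orthonormal[rotated])
      (rule integrable_const_bound[where B=1], simp_all add: abs_inner_sgn_le_1)
  finally show ?thesis
    by (simp add: W_def)
qed

end
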